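(* Every partition tautology is a subset tautology. Moreover the inclusion is strict: for any set $U$ and any partition $\sigma$ on $U$ with $\sigma\neq\mathbf{0}$ and $\sigma\neq\mathbf{1}$ (such $\sigma$ exist when $|U|\ge 3$), one has $\sigma\vee(\sigma\Rightarrow\mathbf{0})=\sigma\neq\mathbf{1}$; hence the formula $x\vee(x\Rightarrow\mathbf{0})$ is a subset tautology but not a partition tautology.
   Context: Formulas are built from variables and the constants $\mathbf{0},\mathbf{1}$ using the binary connectives $\vee,\wedge,\Rightarrow$. A formula is a subset tautology if, for every nonempty set $U$ and every assignment of subsets of $U$ to the variables, it evaluates to $U$ when $\vee,\wedge$ are interpreted as $\cup,\cap$, $S\Rightarrow T$ as $(U\setminus S)\cup T$, $\mathbf{0}$ as $\emptyset$ and $\mathbf{1}$ as $U$. A partition on a set $U$ is a set of non-empty, pairwise disjoint subsets of $U$ (called blocks) whose union is $U$. The discrete partition is $\mathbf{1}=\{\{u\}:u\in U\}$ and the indiscrete partition is $\mathbf{0}=\{U\}$. The join $\pi\vee\sigma$ is the partition whose blocks are the non-empty intersections $B\cap C$, $B\in\pi$, $C\in\sigma$. The meet $\pi\wedge\sigma$ is the partition whose blocks are the equivalence classes of the equivalence relation on $U$ generated by: $u\sim u'$ if $u,u'$ lie in a common block of $\pi$ or in a common block of $\sigma$. The partition implication $\sigma\Rightarrow\pi$ is the partition obtained from $\pi$ by replacing every block $B\in\pi$ that is contained in some block of $\sigma$ by the singletons $\{u\}$, $u\in B$, and leaving every block of $\pi$ not contained in any block of $\sigma$ unchanged. A formula is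 a partition tautology if, for every set $U$ with $|U|\ge 2$ and every assignment of partitions on $U$ to the variables, it evaluates to $\mathbf{1}$ when $\vee,\wedge,\Rightarrow,\mathbf{0},\mathbf{1}$ are interpreted as the partition join, meet, implication, indiscrete and discrete partitions. *)

theory Defs
  imports Main "HOL-Library.Infinite_Typeclass"
begin

datatype form = Var nat | FZero | FOne | FJoin form form | FMeet form form | FImp form form

fun seval :: "'a set \<Rightarrow> (nat \<Rightarrow> 'a set) \<Rightarrow> form \<Rightarrow> 'a set" where
  "seval U \<rho> (Var v) = \<rho> v"
| "seval U \<rho> FZero = {}"
| "seval U \<rho> FOne = U"
| "seval U \<rho> (FJoin p q) = seval U \<rho> p \<union> seval U \<rho> q"
| "seval U \<rho> (FMeet p q) = seval U \<rho> p \<inter> seval U \<rho> q"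
| "seval U \<rho> (FImp p q) = (U - seval U \<rho> p) \<union> seval U \<rho> q"

definition subset_taut :: "'a itself \<Rightarrow> form \<Rightarrow> bool" where
  "subset_taut (_::'a itself) \<phi> \<longleftrightarrow>
     (\<forall>(U::'a set) \<rho>. U \<noteq> {} \<longrightarrow> (\<forall>v. \<rho> v \<subseteq> U) \<longrightarrow> seval U \<rho> \<phi> = U)"

definition is_partition :: "'a set \<Rightarrow> 'a set set \<Rightarrow> bool" where
  "is_partition U P \<longleftrightarrow> (\<forall>B\<in>P. B \<noteq> {}) \<and> (\<forall>B\<in>P. \<forall>C\<in>P. B \<noteq> C \<longrightarrow> B \<inter> C = {}) \<and> \<Union>P = U"

definition pdiscrete :: "'a set \<Rightarrow> 'a set set" where
  "pdiscrete U = {{u} | u. u \<in> U}"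

definition pindiscrete :: "'a set \<Rightarrow> 'a set set" where
  "pindiscrete U = {U}"

definition pjoin :: "'a set set \<Rightarrow> 'a set set \<Rightarrow> 'a set set" where
  "pjoin \<pi> \<sigma> = {B \<inter> C | B C. B \<in> \<pi> \<and> C \<in> \<sigma> \<and> B \<inter> C \<noteq> {}}"

definition pmeet :: "'a set \<Rightarrow> 'a set set \<Rightarrow> 'a set set \<Rightarrow> 'a set set" where
  "pmeet U \<pi> \<sigma> = U // ({(u, u'). \<exists>B \<in> \<pi> \<union> \<sigma>. u \<in> B \<and> u' \<in> B}\<^sup>*)"

definition pimp :: "'a set set \<Rightarrow> 'a set set \<Rightarrow> 'a set set" where
  "pimp \<sigma> \<pi> = {B \<in> \<pi>. \<not> (\<exists>C\<in>\<sigma>. B \<subseteq> C)}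
              \<union> {{u} | u B. B \<in> \<pi> \<and> (\<exists>C\<in>\<sigma>. B \<subseteq> C) \<and> u \<in> B}"

fun peval :: "'a set \<Rightarrow> (nat \<Rightarrow> 'a set set) \<Rightarrow> form \<Rightarrow> 'a set set" where
  "peval U \<rho> (Var v) = \<rho> v"
| "peval U \<rho> FZero = pindiscrete U"
| "peval U \<rho> FOne = pdiscrete U"
| "peval U \<rho> (FJoin p q) = pjoin (peval U \<rho> p) (peval U \<rho> q)"
| "peval U \<rho> (FMeet p q) = pmeet U (peval U \<rho> p) (peval U \<rho> q)"
| "peval U \<rho> (FImp p q) = pimp (peval U \<rho> p) (peval U \<rho> q)"

definition partition_taut :: "'a itself \<Rightarrow> form \<Rightarrow> bool" where
  "partition_taut (_::'a itself) \<phi> \<longleftrightarrow>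
     (\<forall>(U::'a set) \<rho>. (\<exists>a b. a \<in> U \<and> b \<in> U \<and> a \<noteq> b) \<longrightarrow>
        (\<forall>v. is_partition U (\<rho> v)) \<longrightarrow> peval U \<rho> \<phi> = pdiscrete U)"

end

theory Submission
  imports Defs
begin

text \<open>
  On a set with at least two points the discrete and the indiscrete partitions form a copy of
  the two-element Boolean algebra, closed under join, meet and implication. Given a subset
  valuation and a point u, sending each variable to the discrete partition if u lies in its value
  and to the indiscrete one otherwise therefore evaluates every formula to the discrete
  partition exactly when u lies in its subset value; so a partition tautology holds pointwise as
  a subset tautology. For strictness, a partition \<sigma> other than \<zero> has no block containing the
  whole set, so \<sigma> \<Rightarrow> \<zero> = \<zero> and \<sigma> \<or> (\<sigma> \<Rightarrow> \<zero>) = \<sigma>.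
\<close>

definition pbool :: "'a set \<Rightarrow> bool \<Rightarrow> 'a set set" where
  "pbool U b = (if b then pdiscrete U else pindiscrete U)"

lemma pbool_simps [simp]:
  "pbool U True = pdiscrete U"
  "pbool U False = pindiscrete U"
  by (simp_all add: pbool_def)

lemma Union_pdiscrete [simp]: "\<Union>(pdiscrete U) = U"
  unfolding pdiscrete_def by auto

lemma Union_pindiscrete [simp]: "\<Union>(pindiscrete U) = U"
  unfolding pindiscrete_def by auto

lemma pdiscrete_neq_pindiscrete:
  assumes "a \<in> U" "b \<in> U" "a \<noteq> b"
  shows "pdiscrete U \<noteq> pindiscrete U"
proof
  assume "pdiscrete U = pindiscrete U"
  then have "U \<in> pdiscrete U" unfolding pindiscrete_def by simp
  then obtain u where "U = {u}" unfolding pdiscrete_def by blast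
  with assms show False by blast
qed

lemma pbool_eq_pdiscrete_iff:
  assumes "a \<in> U" "b \<in> U" "a \<noteq> b"
  shows "pbool U p = pdiscrete U \<longleftrightarrow> p"
  using pdiscrete_neq_pindiscrete[OF assms] by (simp add: pbool_def)

lemma pjoin_pbool:
  assumes "U \<noteq> {}"
  shows "pjoin (pbool U p) (pbool U q) = pbool U (p \<or> q)"
  using assms unfolding pbool_def pjoin_def pdiscrete_def pindiscrete_def by auto

lemma pmeet_commute: "pmeet U \<pi> \<sigma> = pmeet U \<sigma> \<pi>"
  unfolding pmeet_def by (simp add: Un_commute)

lemma pmeet_pdiscrete: "pmeet U (pdiscrete U) (pdiscrete U) = pdiscrete U"
proof -
  have "{(u, u'). \<exists>B \<in> pdiscrete U \<union> pdiscrete U. u \<in> B \<and> u' \<in> B} = Id_on U"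
    unfolding pdiscrete_def by (auto simp: Id_on_def)
  moreover have "(Id_on U)\<^sup>* = Id"
    using rtrancl_mono[of "Id_on U" Id] by (auto simp: Id_on_def)
  ultimately show ?thesis
    unfolding pmeet_def pdiscrete_def quotient_def by auto
qed

lemma pmeet_pindiscrete_left:
  assumes "U \<noteq> {}" and "\<forall>B\<in>\<sigma>. B \<subseteq> U"
  shows "pmeet U (pindiscrete U) \<sigma> = pindiscrete U"
proof -
  have "{(u, u'). \<exists>B \<in> pindiscrete U \<union> \<sigma>. u \<in> B \<and> u' \<in> B} = U \<times> U"
    using assms(2) unfolding pindiscrete_def by blast
  moreover have "(U \<times> U)\<^sup>* = U \<times> U \<union> Id"
    by (simp add: rtrancl_trancl_reflcl trans_def)
  ultimately show ?thesis
    using assms(1) unfolding pmeet_def pindiscrete_def quotient_def by auto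
qed

lemma pmeet_pbool:
  assumes "U \<noteq> {}"
  shows "pmeet U (pbool U p) (pbool U q) = pbool U (p \<and> q)"
proof -
  have blocks: "\<forall>B\<in>pbool U r. B \<subseteq> U" for r
    unfolding pbool_def pdiscrete_def pindiscrete_def by auto
  have left: "pmeet U (pindiscrete U) (pbool U r) = pindiscrete U" for r
    using pmeet_pindiscrete_left[OF assms blocks] .
  have right: "pmeet U (pbool U r) (pindiscrete U) = pindiscrete U" for r
    using left by (subst pmeet_commute)
  show ?thesis
    using left[of q] right[of True] pmeet_pdiscrete by (cases p; cases q) simp_all
qed

lemma pimp_pdiscrete_right: "\<Union>\<sigma> = U \<Longrightarrow> pimp \<sigma> (pdiscrete U) = pdiscrete U"
  unfolding pimp_def pdiscrete_def by auto

lemma pimp_pbool: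
  assumes "a \<in> U" "b \<in> U" "a \<noteq> b"
  shows "pimp (pbool U p) (pbool U q) = pbool U (p \<longrightarrow> q)"
proof -
  have "pimp (pdiscrete U) (pindiscrete U) = pindiscrete U"
    using assms unfolding pimp_def pdiscrete_def pindiscrete_def by auto
  moreover have "pimp (pindiscrete U) (pindiscrete U) = pdiscrete U"
    using assms unfolding pimp_def pdiscrete_def pindiscrete_def by auto
  ultimately show ?thesis
    by (cases p; cases q) (simp_all add: pbool_def pimp_pdiscrete_right)
qed

lemma peval_pbool:
  assumes "a \<in> U" "b \<in> U" "a \<noteq> b" and "u \<in> W"
  shows "peval U (\<lambda>v. pbool U (u \<in> \<rho> v)) \<phi> = pbool U (u \<in> seval W \<rho> \<phi>)"
proof -
  have "U \<noteq> {}" using assms by blast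
  with \<open>u \<in> W\<close> show ?thesis
    by (induction \<phi>) (simp_all add: pjoin_pbool pmeet_pbool pimp_pbool[OF assms(1-3)])
qed

lemma is_partition_pbool: "U \<noteq> {} \<Longrightarrow> is_partition U (pbool U p)"
  unfolding is_partition_def pbool_def pdiscrete_def pindiscrete_def by auto

lemma seval_subset: "\<forall>v. \<rho> v \<subseteq> U \<Longrightarrow> seval U \<rho> \<phi> \<subseteq> U"
  by (induction \<phi>) auto

lemma obtain_three_distinct:
  obtains a b c :: "'a::infinite" where "a \<noteq> b" "a \<noteq> c" "b \<noteq> c"
proof -
  obtain a :: 'a where True by simp
  obtain b :: 'a where "b \<notin> {a}"
    using ex_new_if_finite[OF infinite_UNIV, of "{a}"] by auto
  obtain c :: 'a where "c \<notin> {a, b}"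
    using ex_new_if_finite[OF infinite_UNIV, of "{a, b}"] by auto
  show ?thesis
    by (rule that[of a b c]) (use \<open>b \<notin> {a}\<close> \<open>c \<notin> {a, b}\<close> in auto)
qed

theorem partition_taut_imp_subset_taut:
  assumes "partition_taut TYPE('a::infinite) \<phi>"
  shows "subset_taut TYPE('b) \<phi>"
  unfolding subset_taut_def
proof (intro allI impI equalityI subsetI)
  fix W :: "'b set" and \<rho> :: "nat \<Rightarrow> 'b set" and u
  assume "\<forall>v. \<rho> v \<subseteq> W"
  then show "u \<in> W" if "u \<in> seval W \<rho> \<phi>"
    using seval_subset that by blast
  obtain a b c :: 'a where "a \<noteq> b" "a \<noteq> c" "b \<noteq> c"
    by (rule obtain_three_distinct)
  assume "u \<in> W"
  let ?\<pi> = "\<lambda>v. pbool (UNIV :: 'a set) (u \<in> \<rho> v)"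
  have "\<exists>x y. x \<in> (UNIV :: 'a set) \<and> y \<in> UNIV \<and> x \<noteq> y"
    using \<open>a \<noteq> b\<close> by blast
  moreover have "is_partition UNIV (?\<pi> v)" for v
    by (simp add: is_partition_pbool)
  ultimately have "peval UNIV ?\<pi> \<phi> = pdiscrete UNIV"
    by (rule assms[unfolded partition_taut_def, rule_format])
  then have "pbool (UNIV :: 'a set) (u \<in> seval W \<rho> \<phi>) = pdiscrete UNIV"
    using peval_pbool[of a UNIV b u W \<rho> \<phi>] \<open>a \<noteq> b\<close> \<open>u \<in> W\<close> by simp
  then show "u \<in> seval W \<rho> \<phi>"
    using pbool_eq_pdiscrete_iff[of a UNIV b] \<open>a \<noteq> b\<close> by simp
qed

lemma partition_eq_pindiscrete_if_superset_block:
  assumes "is_partition U \<sigma>" "C \<in> \<sigma>" "U \<subseteq> C"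
  shows "\<sigma> = pindiscrete U"
proof -
  have nonempty: "B \<noteq> {}" and cover: "B \<subseteq> U"
    and disjoint: "B = C \<or> B \<inter> C = {}" if "B \<in> \<sigma>" for B
    using assms(1,2) that unfolding is_partition_def by blast+
  have "C = U" using cover[OF assms(2)] assms(3) by blast
  have "B = C" if "B \<in> \<sigma>" for B
    using nonempty[OF that] cover[OF that] disjoint[OF that] \<open>C = U\<close> by blast
  then show ?thesis
    using assms(2) \<open>C = U\<close> unfolding pindiscrete_def by blast
qed

lemma pimp_pindiscrete:
  assumes "is_partition U \<sigma>" "\<sigma> \<noteq> pindiscrete U"
  shows "pimp \<sigma> (pindiscrete U) = pindiscrete U"
proof -
  have "\<not> (\<exists>C\<in>\<sigma>. U \<subseteq> C)"
    using partition_eq_pindiscrete_if_superset_block[OF assms(1)] assms(2) by blast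
  then show ?thesis
    unfolding pimp_def pindiscrete_def by auto
qed

lemma pjoin_pindiscrete:
  assumes "is_partition U \<sigma>"
  shows "pjoin \<sigma> (pindiscrete U) = \<sigma>"
proof -
  have blocks: "B \<inter> U = B" "B \<noteq> {}" if "B \<in> \<sigma>" for B
    using assms that unfolding is_partition_def by blast+
  have "pjoin \<sigma> (pindiscrete U) = {B \<inter> U | B. B \<in> \<sigma> \<and> B \<inter> U \<noteq> {}}"
    unfolding pjoin_def pindiscrete_def by blast
  also have "\<dots> = \<sigma>"
    using blocks by (auto intro!: exI)
  finally show ?thesis .
qed

lemma pjoin_pimp_pindiscrete:
  assumes "is_partition U \<sigma>" "\<sigma> \<noteq> pindiscrete U"
  shows "pjoin \<sigma> (pimp \<sigma> (pindiscrete U)) = \<sigma>"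
  by (simp add: assms pimp_pindiscrete pjoin_pindiscrete)

lemma exists_nontrivial_partition:
  assumes "a \<in> U" "b \<in> U" "c \<in> U" "a \<noteq> b" "a \<noteq> c" "b \<noteq> c"
  shows "\<exists>\<sigma>. is_partition U \<sigma> \<and> \<sigma> \<noteq> pindiscrete U \<and> \<sigma> \<noteq> pdiscrete U"
proof (intro exI conjI)
  let ?\<sigma> = "{{a}, U - {a}}"
  have "U - {a} \<noteq> {}" "\<Union>?\<sigma> = U" using assms by blast+
  then show "is_partition U ?\<sigma>"
    unfolding is_partition_def by auto
  show "?\<sigma> \<noteq> pindiscrete U"
  proof
    assume "?\<sigma> = pindiscrete U"
    then have "{a} \<in> {U}" unfolding pindiscrete_def by (metis insertI1)
    then have "{a} = U" by simp
    with assms show False by blast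
  qed
  show "?\<sigma> \<noteq> pdiscrete U"
  proof
    assume "?\<sigma> = pdiscrete U"
    then have "U - {a} \<in> pdiscrete U" by blast
    then obtain u where "U - {a} = {u}" unfolding pdiscrete_def by blast
    moreover have "b \<in> U - {a}" "c \<in> U - {a}" using assms by simp_all
    ultimately show False using \<open>b \<noteq> c\<close> by simp
  qed
qed


lemma subset_taut_excluded_middle: "subset_taut TYPE('b) (FJoin (Var 0) (FImp (Var 0) FZero))"
  unfolding subset_taut_def
proof (intro allI impI)
  fix U :: "'b set" and \<rho> :: "nat \<Rightarrow> 'b set"
  assume "\<forall>v. \<rho> v \<subseteq> U"
  then have "\<rho> 0 \<subseteq> U" ..
  then show "seval U \<rho> (FJoin (Var 0) (FImp (Var 0) FZero)) = U" by auto
qed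

lemma not_partition_taut_excluded_middle:
  "\<not> partition_taut TYPE('a::infinite) (FJoin (Var 0) (FImp (Var 0) FZero))"
proof
  assume taut: "partition_taut TYPE('a) (FJoin (Var 0) (FImp (Var 0) FZero))"
  obtain a b c :: 'a where "a \<noteq> b" "a \<noteq> c" "b \<noteq> c"
    by (rule obtain_three_distinct)
  then have "\<exists>\<sigma>. is_partition (UNIV :: 'a set) \<sigma> \<and> \<sigma> \<noteq> pindiscrete UNIV \<and> \<sigma> \<noteq> pdiscrete UNIV"
    by (intro exists_nontrivial_partition UNIV_I)
  then obtain \<sigma> :: "'a set set"
    where \<sigma>: "is_partition UNIV \<sigma>" "\<sigma> \<noteq> pindiscrete UNIV" "\<sigma> \<noteq> pdiscrete UNIV"
    by blast
  have "\<exists>x y. x \<in> (UNIV :: 'a set) \<and> y \<in> UNIV \<and> x \<noteq> y"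
    using \<open>a \<noteq> b\<close> by blast
  then have "peval UNIV (\<lambda>_. \<sigma>) (FJoin (Var 0) (FImp (Var 0) FZero)) = pdiscrete UNIV"
    using \<sigma>(1) by (rule taut[unfolded partition_taut_def, rule_format])
  with \<sigma> show False
    by (simp add: pjoin_pimp_pindiscrete)
qed

theorem mainTheorem8:
  shows "(\<forall>\<phi>. partition_taut TYPE('a::infinite) \<phi> \<longrightarrow> subset_taut TYPE('b) \<phi>)
    \<and> (\<forall>(U::'c set) \<sigma>. is_partition U \<sigma> \<and> \<sigma> \<noteq> pindiscrete U \<and> \<sigma> \<noteq> pdiscrete U \<longrightarrow>
          pjoin \<sigma> (pimp \<sigma> (pindiscrete U)) = \<sigma> \<and> \<sigma> \<noteq> pdiscrete U)
    \<and> (\<forall>(U::'c set). (\<exists>a b c. a \<in> U \<and> b \<in> U \<and> c \<in> U \<and> a \<noteq> b \<and> a \<noteq> c \<and> b \<noteq> c) \<longrightarrow>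
          (\<exists>\<sigma>. is_partition U \<sigma> \<and> \<sigma> \<noteq> pindiscrete U \<and> \<sigma> \<noteq> pdiscrete U))
    \<and> subset_taut TYPE('b) (FJoin (Var 0) (FImp (Var 0) FZero))
    \<and> \<not> partition_taut TYPE('a) (FJoin (Var 0) (FImp (Var 0) FZero))"
proof (intro conjI allI impI)
  show "partition_taut TYPE('a) \<phi> \<Longrightarrow> subset_taut TYPE('b) \<phi>" for \<phi>
    by (rule partition_taut_imp_subset_taut)
  show "pjoin \<sigma> (pimp \<sigma> (pindiscrete U)) = \<sigma>" "\<sigma> \<noteq> pdiscrete U"
    if "is_partition U \<sigma> \<and> \<sigma> \<noteq> pindiscrete U \<and> \<sigma> \<noteq> pdiscrete U" for U :: "'c set" and \<sigma>
    using that pjoin_pimp_pindiscrete[of U \<sigma>] by simp_all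
  show "\<exists>\<sigma>. is_partition U \<sigma> \<and> \<sigma> \<noteq> pindiscrete U \<and> \<sigma> \<noteq> pdiscrete U"
    if "\<exists>a b c. a \<in> U \<and> b \<in> U \<and> c \<in> U \<and> a \<noteq> b \<and> a \<noteq> c \<and> b \<noteq> c" for U :: "'c set"
    using that by (elim exE conjE) (rule exists_nontrivial_partition)
qed (fact subset_taut_excluded_middle not_partition_taut_excluded_middle)+

end
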